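(* Let $n,m\ge1$, $t\ge1$, $\mathbf y\in\{0,1\}^n$ fixed training labels with $l^\star=\sum_iy_i$, $\Psi\in\mathbb R^{m\times n}$, thresholds $\tau_1,\dots,\tau_t\in\mathbb R$, and metrics $\mathrm{metric}^{(0)},\dots,\mathrm{metric}^{(t)}$, each of the form $$\mathrm{metric}^{(i)}(\hat{\mathbf y},\check{\mathbf y})=\sum_{j}\frac{a^{(i)}_j\mathrm{TP}+b^{(i)}_j\mathrm{TN}+f^{(i)}_j(\mathrm{PP},\mathrm{AP})}{g^{(i)}_j(\mathrm{PP},\mathrm{AP})}.$$ Then $$\max_{\theta\in\mathbb R^m}\ \min_{\mathcal Q}\ \max_{\mathcal P:\ \mathbb E_{\hat{\mathbf Y}\sim\mathcal P}[\mathrm{metric}^{(i)}(\hat{\mathbf Y},\mathbf y)]\ge\tau_i\ \forall i\in[1,t]}\ \mathbb E_{\hat{\mathbf Y}\sim\mathcal P,\check{\mathbf Y}\sim\mathcal Q}\Big[\mathrm{metric}^{(0)}(\hat{\mathbf Y},\check{\mathbf Y})-\theta^\top(\Psi\check{\mathbf Y}-\Psi\mathbf y)\Big]$$ ($\mathcal P,\mathcal Q$ probability distributions on $\{0,1\}^n$, $\hat{\mathbf Y},\check{\mathbf Y}$ independent) equals $$\max_{\theta}\Big\{\min_{\mathbf Q\in\Delta}\max_{\mathbf P\in\Delta\cap\Gamma}\Big[\sum_{k,l=0}^n\sum_j\frac{1}{g^{(0)}_j(k,l)}\Big\{a^{(0)}_j[\mathbf p_k^1\cdot\mathbf q_l^1]+b^{(0)}_j[\mathbf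 p_k^0\cdot\mathbf q_l^0]+f^{(0)}_j(k,l)r_ks_l\Big\}-\langle\mathbf Q^\top\mathbf 1,\Psi^\top\theta\rangle\Big]+\langle\mathbf y,\Psi^\top\theta\rangle\Big\},$$ where $$\Gamma=\Big\{\mathbf P:\ \sum_{k=0}^n\sum_j\frac{1}{g^{(i)}_j(k,l^\star)}\Big\{a^{(i)}_j[\mathbf p_k^1\cdot\mathbf y]+b^{(i)}_j[\mathbf p_k^0\cdot(\mathbf 1-\mathbf y)]+f^{(i)}_j(k,l^\star)r_k\Big\}\ge\tau_i\ \ \forall i\in[1,t]\Big\}.$$
   Context: For $\hat{\mathbf y},\check{\mathbf y}\in\{0,1\}^n$: $\mathrm{TP}=\sum\hat y_i\check y_i$, $\mathrm{TN}=\sum(1-\hat y_i)(1-\check y_i)$, $\mathrm{PP}=\sum\hat y_i$, $\mathrm{AP}=\sum\check y_i$; $a_j^{(i)},b_j^{(i)}\in\mathbb R$, $f_j^{(i)},g_j^{(i)}:\{0,\dots,n\}^2\to\mathbb R$ with $g_j^{(i)}$ never zero. The $i$-th column of $\Psi$ is the feature $\phi(x_i,1)\in\mathbb R^m$ of sample $i$ (with $\phi(x_i,0)=0$), so the feature of a label vector $\mathbf y$ is $\Psi\mathbf y$. $\Delta=\{\mathbf P\in\mathbb R^{n\times n}: p_{i,k}\ge0;\ p_{i,k}\le\frac1k\sum_jp_{j,k}\ \forall i,k\in[1,n];\ \sum_k\frac1k\sum_ip_{i,k}\le1\}$. From $\mathbf P$: $\mathbf p_k^1=\mathbf P_{(:,k)}$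 ($k\ge1$), $\mathbf p_0^1=\mathbf 0$; $r_k=\frac1k\mathbf 1^\top\mathbf p_k^1$ ($k\ge1$), $r_0=1-\sum_{k\ge1}r_k$; $\mathbf p_k^0=r_k\mathbf 1-\mathbf p_k^1$; likewise $\mathbf q_l^1,\mathbf q_l^0,s_l$ from $\mathbf Q$. *)

theory Defs
  imports Main "HOL-Library.Extended_Real"
begin

definition labels :: "nat \<Rightarrow> (nat \<Rightarrow> bool) set" where
  "labels n = {v. \<forall>i. n \<le> i \<longrightarrow> \<not> v i}"

definition TP :: "nat \<Rightarrow> (nat \<Rightarrow> bool) \<Rightarrow> (nat \<Rightarrow> bool) \<Rightarrow> real" where
  "TP n yh yc = (\<Sum>i<n. of_bool (yh i) * of_bool (yc i))"

definition TN :: "nat \<Rightarrow> (nat \<Rightarrow> bool) \<Rightarrow> (nat \<Rightarrow> bool) \<Rightarrow> real" where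
  "TN n yh yc = (\<Sum>i<n. (1 - of_bool (yh i)) * (1 - of_bool (yc i)))"

definition PP :: "nat \<Rightarrow> (nat \<Rightarrow> bool) \<Rightarrow> nat" where
  "PP n yh = (\<Sum>i<n. of_bool (yh i))"

definition AP :: "nat \<Rightarrow> (nat \<Rightarrow> bool) \<Rightarrow> nat" where
  "AP n yc = (\<Sum>i<n. of_bool (yc i))"

definition metric ::
  "(nat \<Rightarrow> nat \<Rightarrow> real) \<Rightarrow> (nat \<Rightarrow> nat \<Rightarrow> real) \<Rightarrow>
   (nat \<Rightarrow> nat \<Rightarrow> nat \<Rightarrow> nat \<Rightarrow> real) \<Rightarrow> (nat \<Rightarrow> nat \<Rightarrow> nat \<Rightarrow> nat \<Rightarrow> real) \<Rightarrow>
   (nat \<Rightarrow> nat) \<Rightarrow> nat \<Rightarrow> nat \<Rightarrow> (nat \<Rightarrow> bool) \<Rightarrow> (nat \<Rightarrow> bool) \<Rightarrow> real" where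
  "metric a b f g J n i yh yc =
     (\<Sum>j<J i. (a i j * TP n yh yc + b i j * TN n yh yc + f i j (PP n yh) (AP n yc))
               / g i j (PP n yh) (AP n yc))"

definition dists :: "nat \<Rightarrow> ((nat \<Rightarrow> bool) \<Rightarrow> real) set" where
  "dists n = {P. (\<forall>v\<in>labels n. 0 \<le> P v) \<and> (\<forall>v. v \<notin> labels n \<longrightarrow> P v = 0)
                 \<and> (\<Sum>v\<in>labels n. P v) = 1}"

definition Delta :: "nat \<Rightarrow> (nat \<Rightarrow> nat \<Rightarrow> real) set" where
  "Delta n = {P. (\<forall>i k. (n \<le> i \<or> k = 0 \<or> n < k) \<longrightarrow> P i k = 0)
     \<and> (\<forall>i<n. \<forall>k\<in>{1..n}. 0 \<le> P i k)
     \<and> (\<forall>i<n. \<forall>k\<in>{1..n}. P i k \<le> (1 / real k) * (\<Sum>j<n. P j k))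
     \<and> (\<Sum>k\<in>{1..n}. (1 / real k) * (\<Sum>i<n. P i k)) \<le> 1}"

definition p1 :: "(nat \<Rightarrow> nat \<Rightarrow> real) \<Rightarrow> nat \<Rightarrow> nat \<Rightarrow> real" where
  "p1 P k i = (if k = 0 then 0 else P i k)"

definition rr :: "nat \<Rightarrow> (nat \<Rightarrow> nat \<Rightarrow> real) \<Rightarrow> nat \<Rightarrow> real" where
  "rr n P k = (if k = 0 then 1 - (\<Sum>k'\<in>{1..n}. (1 / real k') * (\<Sum>i<n. P i k'))
               else (1 / real k) * (\<Sum>i<n. P i k))"

definition p0 :: "nat \<Rightarrow> (nat \<Rightarrow> nat \<Rightarrow> real) \<Rightarrow> nat \<Rightarrow> nat \<Rightarrow> real" where
  "p0 n P k i = rr n P k - p1 P k i"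

end

(* A distribution D of label vectors enters the objective and the constraints only through
   p(s,k) = Pr[Y s \<and> PP Y = k] and r(k) = Pr[PP Y = k], because each metric is affine in TP and TN
   once PP and AP are fixed. These numbers form marginal_matrix n D, whose p1, p0 and rr are the
   paper's p^1, p^0 and r. The marginal map sends distributions onto Delta: for k \<ge> 1 the k-th
   column divided by r(k) lies in the hypersimplex {x \<in> [0,1]^n. \<Sum>x = k}, every point of which is
   the mean of a distribution on the label vectors with exactly k positives (move mass between two
   fractional coordinates until one becomes integral, and recurse on both endpoints); the remaining
   mass r(0) goes to the all-negative labelling. As the objectives agree along this surjection up to
   a summand independent of P and Q, the inner inf-sup values coincide for every theta. *)

theory Submission
  imports Defs
begin

lemma finite_labels [simp]: "finite (labels n)"
proof (rule finite_subset)
  show "labels n \<subseteq> (\<lambda>S i. i \<in> S) ` Pow {..<n}"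
  proof
    fix v assume "v \<in> labels n"
    then have "{i. v i} \<in> Pow {..<n}" by (auto simp: labels_def not_le[symmetric])
    then show "v \<in> (\<lambda>S i. i \<in> S) ` Pow {..<n}" by (rule image_eqI[rotated]) simp
  qed
qed simp

lemma False_in_labels [simp]: "(\<lambda>_. False) \<in> labels n"
  by (simp add: labels_def)

lemma of_nat_PP: "real (PP n v) = (\<Sum>i<n. of_bool (v i))"
  by (simp add: PP_def)

lemma AP_eq_PP: "AP n v = PP n v"
  by (simp add: AP_def PP_def)

lemma PP_le: "PP n v \<le> n"
  using sum_bounded_above[of "{..<n}" "\<lambda>i. of_bool (v i) :: nat" 1] by (simp add: PP_def)

lemma PP_pos: "s < n \<Longrightarrow> v s \<Longrightarrow> 0 < PP n v"
  unfolding PP_def by (rule ordered_comm_monoid_add_class.sum_pos2[of _ s]) auto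

section \<open>Marginal statistics of a distribution of labellings\<close>

declare sum_mult_of_bool_eq [simp del] sum_of_bool_mult_eq [simp del]

definition pos_mass :: "nat \<Rightarrow> ((nat \<Rightarrow> bool) \<Rightarrow> real) \<Rightarrow> nat \<Rightarrow> nat \<Rightarrow> real" where
  "pos_mass n D k s = (\<Sum>v\<in>labels n. D v * of_bool (v s) * of_bool (PP n v = k))"

definition neg_mass :: "nat \<Rightarrow> ((nat \<Rightarrow> bool) \<Rightarrow> real) \<Rightarrow> nat \<Rightarrow> nat \<Rightarrow> real" where
  "neg_mass n D k s = (\<Sum>v\<in>labels n. D v * (1 - of_bool (v s)) * of_bool (PP n v = k))"

definition count_mass :: "nat \<Rightarrow> ((nat \<Rightarrow> bool) \<Rightarrow> real) \<Rightarrow> nat \<Rightarrow> real" where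
  "count_mass n D k = (\<Sum>v\<in>labels n. D v * of_bool (PP n v = k))"

definition marginal_matrix :: "nat \<Rightarrow> ((nat \<Rightarrow> bool) \<Rightarrow> real) \<Rightarrow> nat \<Rightarrow> nat \<Rightarrow> real" where
  "marginal_matrix n D s k = (if s < n \<and> 1 \<le> k \<and> k \<le> n then pos_mass n D k s else 0)"

lemma neg_mass_eq: "neg_mass n D k s = count_mass n D k - pos_mass n D k s"
  unfolding neg_mass_def count_mass_def pos_mass_def by (simp add: algebra_simps sum_subtractf)

lemma sum_labels_by_PP:
  fixes F :: "(nat \<Rightarrow> bool) \<Rightarrow> nat \<Rightarrow> real"
  shows "(\<Sum>v\<in>labels n. F v (PP n v)) = (\<Sum>k\<in>{0..n}. \<Sum>v\<in>labels n. of_bool (PP n v = k) * F v k)"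
proof -
  have "(\<Sum>v\<in>labels n. F v (PP n v))
      = (\<Sum>v\<in>labels n. \<Sum>k\<in>{0..n}. of_bool (PP n v = k) * F v k)"
  proof (rule sum.cong[OF refl])
    fix v
    show "F v (PP n v) = (\<Sum>k\<in>{0..n}. of_bool (PP n v = k) * F v k)"
      using PP_le[of n v] by (simp add: sum_of_bool_mult_eq Int_absorb1)
  qed
  also have "\<dots> = (\<Sum>k\<in>{0..n}. \<Sum>v\<in>labels n. of_bool (PP n v = k) * F v k)"
    by (rule sum.swap)
  finally show ?thesis .
qed

lemma sum_count_mass: "D \<in> dists n \<Longrightarrow> (\<Sum>k\<in>{0..n}. count_mass n D k) = 1"
  using sum_labels_by_PP[of "\<lambda>v k. D v" n]
  by (simp add: count_mass_def dists_def mult.commute)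

lemma count_mass_0: "D \<in> dists n \<Longrightarrow> count_mass n D 0 = 1 - (\<Sum>k\<in>{1..n}. count_mass n D k)"
  using sum_count_mass[of D n] by (simp add: sum.atLeast_Suc_atMost)

lemma sum_pos_mass: "(\<Sum>s<n. pos_mass n D k s) = real k * count_mass n D k"
proof -
  have "(\<Sum>s<n. pos_mass n D k s)
      = (\<Sum>v\<in>labels n. D v * of_bool (PP n v = k) * (\<Sum>s<n. of_bool (v s)))"
    unfolding pos_mass_def sum_distrib_left by (subst sum.swap) (simp add: mult_ac)
  also have "\<dots> = (\<Sum>v\<in>labels n. real k * (D v * of_bool (PP n v = k)))"
    by (rule sum.cong[OF refl]) (auto simp: of_nat_PP[symmetric])
  finally show ?thesis by (simp add: count_mass_def sum_distrib_left)
qed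

lemma pos_mass_nonneg: "D \<in> dists n \<Longrightarrow> 0 \<le> pos_mass n D k s"
  unfolding pos_mass_def dists_def by (intro sum_nonneg) auto

lemma pos_mass_le_count_mass: "D \<in> dists n \<Longrightarrow> pos_mass n D k s \<le> count_mass n D k"
  unfolding pos_mass_def count_mass_def dists_def by (intro sum_mono) auto

lemma pos_mass_0: "s < n \<Longrightarrow> pos_mass n D 0 s = 0"
  unfolding pos_mass_def using PP_pos[of s n] by (intro sum.neutral) force

lemma column_mass_marginal_matrix:
  "1 \<le> k \<Longrightarrow> k \<le> n \<Longrightarrow> (1 / real k) * (\<Sum>s<n. marginal_matrix n D s k) = count_mass n D k"
  by (simp add: marginal_matrix_def sum_pos_mass)

lemma rr_marginal_matrix:
  assumes "D \<in> dists n" "k \<le> n"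
  shows "rr n (marginal_matrix n D) k = count_mass n D k"
proof -
  have "(\<Sum>k'\<in>{1..n}. (1 / real k') * (\<Sum>s<n. marginal_matrix n D s k'))
      = (\<Sum>k'\<in>{1..n}. count_mass n D k')"
    by (intro sum.cong refl column_mass_marginal_matrix) auto
  then show ?thesis
    using assms column_mass_marginal_matrix[of k n D] count_mass_0[OF assms(1)] by (auto simp: rr_def)
qed

lemma p1_marginal_matrix: "s < n \<Longrightarrow> k \<le> n \<Longrightarrow> p1 (marginal_matrix n D) k s = pos_mass n D k s"
  by (auto simp: p1_def marginal_matrix_def pos_mass_0)

lemma p0_marginal_matrix:
  "D \<in> dists n \<Longrightarrow> s < n \<Longrightarrow> k \<le> n \<Longrightarrow> p0 n (marginal_matrix n D) k s = neg_mass n D k s"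
  by (simp add: p0_def rr_marginal_matrix p1_marginal_matrix neg_mass_eq)

lemma marginal_matrix_Delta:
  assumes D: "D \<in> dists n"
  shows "marginal_matrix n D \<in> Delta n"
proof -
  have "(\<Sum>k\<in>{1..n}. (1 / real k) * (\<Sum>s<n. marginal_matrix n D s k)) = (\<Sum>k\<in>{1..n}. count_mass n D k)"
    by (intro sum.cong refl column_mass_marginal_matrix) auto
  also have "\<dots> = 1 - count_mass n D 0"
    using count_mass_0[OF D] by simp
  also have "\<dots> \<le> 1"
    using D unfolding count_mass_def dists_def by (auto intro!: sum_nonneg)
  finally show ?thesis
    using pos_mass_nonneg[OF D] pos_mass_le_count_mass[OF D] column_mass_marginal_matrix[of _ n D]
    unfolding Delta_def by (auto simp: marginal_matrix_def)
qed

section \<open>Expected metrics in terms of the marginals\<close>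

lemma sum_weighted_affine:
  fixes c T1 T2 :: "'x \<Rightarrow> real"
  shows "(\<Sum>v\<in>V. c v * (\<Sum>j\<in>S. (1 / G j) * (A j * T1 v + B j * T2 v + E j)))
    = (\<Sum>j\<in>S. (1 / G j) * (A j * (\<Sum>v\<in>V. c v * T1 v) + B j * (\<Sum>v\<in>V. c v * T2 v) + E j * sum c V))"
proof -
  have "(\<Sum>v\<in>V. c v * (\<Sum>j\<in>S. (1 / G j) * (A j * T1 v + B j * T2 v + E j)))
      = (\<Sum>j\<in>S. \<Sum>v\<in>V. c v * ((1 / G j) * (A j * T1 v + B j * T2 v + E j)))"
    unfolding sum_distrib_left by (rule sum.swap)
  then show ?thesis
    by (simp add: sum_distrib_left sum_distrib_right sum.distrib algebra_simps)
qed

lemma sum_weighted_TP: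
  "(\<Sum>v\<in>V. c v * TP n v yc) = (\<Sum>s<n. (\<Sum>v\<in>V. c v * of_bool (v s)) * of_bool (yc s))"
  unfolding TP_def sum_distrib_left sum_distrib_right by (subst sum.swap) (simp add: mult_ac)

lemma sum_weighted_TN:
  "(\<Sum>v\<in>V. c v * TN n v yc) = (\<Sum>s<n. (\<Sum>v\<in>V. c v * (1 - of_bool (v s))) * (1 - of_bool (yc s)))"
  unfolding TN_def sum_distrib_left sum_distrib_right by (subst sum.swap) (simp add: mult_ac)

lemma expected_metric:
  "(\<Sum>v\<in>labels n. D v * metric a b f g J n i v yc) =
   (\<Sum>k\<in>{0..n}. \<Sum>j<J i. (1 / g i j k (AP n yc)) *
      (a i j * (\<Sum>s<n. pos_mass n D k s * of_bool (yc s))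
       + b i j * (\<Sum>s<n. neg_mass n D k s * (1 - of_bool (yc s)))
       + f i j k (AP n yc) * count_mass n D k))"
proof -
  define l where "l = AP n yc"
  define M where "M v k = (\<Sum>j<J i. (1 / g i j k l) * (a i j * TP n v yc + b i j * TN n v yc + f i j k l))"
    for v k
  have "(\<Sum>v\<in>labels n. D v * metric a b f g J n i v yc) = (\<Sum>v\<in>labels n. D v * M v (PP n v))"
    by (simp add: M_def metric_def l_def)
  also have "\<dots> = (\<Sum>k\<in>{0..n}. \<Sum>v\<in>labels n. (D v * of_bool (PP n v = k)) * M v k)"
    unfolding sum_labels_by_PP[of "\<lambda>v k. D v * M v k"] by (simp add: mult_ac)
  also have "\<dots> = (\<Sum>k\<in>{0..n}. \<Sum>j<J i. (1 / g i j k l) *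
      (a i j * (\<Sum>s<n. pos_mass n D k s * of_bool (yc s))
       + b i j * (\<Sum>s<n. neg_mass n D k s * (1 - of_bool (yc s)))
       + f i j k l * count_mass n D k))"
    unfolding M_def sum_weighted_affine sum_weighted_TP sum_weighted_TN
    by (simp add: pos_mass_def neg_mass_def count_mass_def mult_ac)
  finally show ?thesis unfolding l_def .
qed

lemma expected_metric_pair:
  "(\<Sum>yh\<in>labels n. \<Sum>yc\<in>labels n. P yh * Q yc * metric a b f g J n i yh yc) =
   (\<Sum>k\<in>{0..n}. \<Sum>l\<in>{0..n}. \<Sum>j<J i. (1 / g i j k l) *
      (a i j * (\<Sum>s<n. pos_mass n P k s * pos_mass n Q l s)
       + b i j * (\<Sum>s<n. neg_mass n P k s * neg_mass n Q l s)
       + f i j k l * count_mass n P k * count_mass n Q l))"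
proof -
  define R where "R yc l = (\<Sum>k\<in>{0..n}. \<Sum>j<J i. (1 / g i j k l) *
      (a i j * (\<Sum>s<n. pos_mass n P k s * of_bool (yc s))
       + b i j * (\<Sum>s<n. neg_mass n P k s * (1 - of_bool (yc s)))
       + f i j k l * count_mass n P k))" for yc l
  define T where "T k l = (\<Sum>j<J i. (1 / g i j k l) *
      (a i j * (\<Sum>s<n. pos_mass n P k s * pos_mass n Q l s)
       + b i j * (\<Sum>s<n. neg_mass n P k s * neg_mass n Q l s)
       + f i j k l * count_mass n P k * count_mass n Q l))" for k l
  have level: "(\<Sum>yc\<in>labels n. (Q yc * of_bool (PP n yc = l)) * R yc l) = (\<Sum>k\<in>{0..n}. T k l)" for l
  proof -
    define c where "c yc = Q yc * of_bool (PP n yc = l)" for yc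
    have pos: "(\<Sum>yc\<in>labels n. c yc * (\<Sum>s<n. pos_mass n P k s * of_bool (yc s)))
        = (\<Sum>s<n. pos_mass n P k s * pos_mass n Q l s)" for k
      unfolding c_def pos_mass_def[of n Q] sum_distrib_left sum_distrib_right
      by (subst sum.swap) (simp add: mult_ac)
    have neg: "(\<Sum>yc\<in>labels n. c yc * (\<Sum>s<n. neg_mass n P k s * (1 - of_bool (yc s))))
        = (\<Sum>s<n. neg_mass n P k s * neg_mass n Q l s)" for k
      unfolding c_def neg_mass_def[of n Q] sum_distrib_left sum_distrib_right
      by (subst sum.swap) (simp add: mult_ac)
    have count: "sum c (labels n) = count_mass n Q l"
      by (simp add: c_def count_mass_def)
    have "(\<Sum>yc\<in>labels n. c yc * R yc l) = (\<Sum>k\<in>{0..n}. \<Sum>yc\<in>labels n. c yc * (\<Sum>j<J i.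
        (1 / g i j k l) * (a i j * (\<Sum>s<n. pos_mass n P k s * of_bool (yc s))
          + b i j * (\<Sum>s<n. neg_mass n P k s * (1 - of_bool (yc s))) + f i j k l * count_mass n P k)))"
      unfolding R_def sum_distrib_left by (rule sum.swap)
    also have "\<dots> = (\<Sum>k\<in>{0..n}. T k l)"
      unfolding sum_weighted_affine pos neg count T_def by (simp add: mult_ac)
    finally show ?thesis unfolding c_def .
  qed
  have "(\<Sum>yh\<in>labels n. \<Sum>yc\<in>labels n. P yh * Q yc * metric a b f g J n i yh yc)
      = (\<Sum>yc\<in>labels n. Q yc * (\<Sum>yh\<in>labels n. P yh * metric a b f g J n i yh yc))"
    by (subst sum.swap) (simp add: sum_distrib_left mult_ac)
  also have "\<dots> = (\<Sum>yc\<in>labels n. Q yc * R yc (PP n yc))"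
    by (simp add: expected_metric R_def AP_eq_PP)
  also have "\<dots> = (\<Sum>l\<in>{0..n}. \<Sum>k\<in>{0..n}. T k l)"
    unfolding sum_labels_by_PP[of "\<lambda>yc l. Q yc * R yc l"] level[symmetric] by (simp add: mult_ac)
  also have "\<dots> = (\<Sum>k\<in>{0..n}. \<Sum>l\<in>{0..n}. T k l)"
    by (rule sum.swap)
  finally show ?thesis unfolding T_def .
qed

lemma sum_marginal_matrix_row:
  assumes "s < n"
  shows "(\<Sum>l\<in>{1..n}. marginal_matrix n Q s l) = (\<Sum>v\<in>labels n. Q v * of_bool (v s))"
proof -
  have "(\<Sum>l\<in>{1..n}. marginal_matrix n Q s l) = (\<Sum>l\<in>{0..n}. pos_mass n Q l s)"
    using assms by (simp add: marginal_matrix_def pos_mass_0 sum.atLeast_Suc_atMost)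
  also have "\<dots> = (\<Sum>v\<in>labels n. Q v * of_bool (v s))"
    using sum_labels_by_PP[of "\<lambda>v k. Q v * of_bool (v s)" n] by (simp add: pos_mass_def mult_ac)
  finally show ?thesis .
qed

lemma expected_feature_shift:
  assumes "Q \<in> dists n"
  shows "(\<Sum>yc\<in>labels n. Q yc * (\<Sum>s<n. w s * (of_bool (yc s) - of_bool (y s))))
    = (\<Sum>s<n. (\<Sum>l\<in>{1..n}. marginal_matrix n Q s l) * w s) - (\<Sum>s<n. of_bool (y s) * w s)"
proof -
  have "(\<Sum>yc\<in>labels n. Q yc * (\<Sum>s<n. w s * (of_bool (yc s) - of_bool (y s))))
      = (\<Sum>s<n. \<Sum>yc\<in>labels n. Q yc * (w s * (of_bool (yc s) - of_bool (y s))))"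
    unfolding sum_distrib_left by (rule sum.swap)
  also have "\<dots> = (\<Sum>s<n. w s * ((\<Sum>yc\<in>labels n. Q yc * of_bool (yc s))
      - (\<Sum>yc\<in>labels n. Q yc) * of_bool (y s)))"
    by (intro sum.cong refl)
      (simp add: right_diff_distrib sum_subtractf sum_distrib_left sum_distrib_right mult_ac)
  also have "\<dots> = (\<Sum>s<n. (\<Sum>l\<in>{1..n}. marginal_matrix n Q s l) * w s - of_bool (y s) * w s)"
    using assms sum_marginal_matrix_row[of _ n Q]
    by (intro sum.cong refl) (simp add: dists_def algebra_simps)
  finally show ?thesis
    by (simp add: sum_subtractf)
qed

lemma expected_constraint:
  assumes "P \<in> dists n" and "lstar = (\<Sum>i<n. of_bool (y i))"
  shows "(\<Sum>v\<in>labels n. P v * metric a b f g J n i v y) =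
    (\<Sum>k\<in>{0..n}. \<Sum>j<J i. (1 / g i j k lstar) *
       (a i j * (\<Sum>s<n. p1 (marginal_matrix n P) k s * of_bool (y s))
        + b i j * (\<Sum>s<n. p0 n (marginal_matrix n P) k s * (1 - of_bool (y s)))
        + f i j k lstar * rr n (marginal_matrix n P) k))"
proof -
  have "AP n y = lstar" using assms(2) by (simp add: AP_def)
  then show ?thesis
    using assms(1) by (simp add: expected_metric p1_marginal_matrix p0_marginal_matrix rr_marginal_matrix)
qed

lemma expected_objective:
  assumes P: "P \<in> dists n" and Q: "Q \<in> dists n"
  shows "(\<Sum>yh\<in>labels n. \<Sum>yc\<in>labels n. P yh * Q yc *
             (metric a b f g J n 0 yh yc
              - (\<Sum>r<m. \<theta> r * (\<Sum>i<n. Psi r i * (of_bool (yc i) - of_bool (y i))))))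
   = ((\<Sum>k\<in>{0..n}. \<Sum>l\<in>{0..n}. \<Sum>j<J 0. (1 / g 0 j k l) *
          (a 0 j * (\<Sum>s<n. p1 (marginal_matrix n P) k s * p1 (marginal_matrix n Q) l s)
           + b 0 j * (\<Sum>s<n. p0 n (marginal_matrix n P) k s * p0 n (marginal_matrix n Q) l s)
           + f 0 j k l * rr n (marginal_matrix n P) k * rr n (marginal_matrix n Q) l))
       - (\<Sum>s<n. (\<Sum>l\<in>{1..n}. marginal_matrix n Q s l) * (\<Sum>r<m. Psi r s * \<theta> r)))
      + (\<Sum>s<n. of_bool (y s) * (\<Sum>r<m. Psi r s * \<theta> r))"
proof -
  define w where "w s = (\<Sum>r<m. Psi r s * \<theta> r)" for s
  define shift where "shift yc = (\<Sum>s<n. w s * (of_bool (yc s) - of_bool (y s)))" for yc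
  have shift: "(\<Sum>r<m. \<theta> r * (\<Sum>i<n. Psi r i * (of_bool (yc i) - of_bool (y i)))) = shift yc" for yc
    unfolding shift_def w_def sum_distrib_left sum_distrib_right by (subst sum.swap) (simp add: mult_ac)
  have "(\<Sum>yh\<in>labels n. \<Sum>yc\<in>labels n. P yh * Q yc * (metric a b f g J n 0 yh yc - shift yc))
     = (\<Sum>yh\<in>labels n. \<Sum>yc\<in>labels n. P yh * Q yc * metric a b f g J n 0 yh yc)
       - (\<Sum>yh\<in>labels n. P yh) * (\<Sum>yc\<in>labels n. Q yc * shift yc)"
    by (simp add: right_diff_distrib sum_subtractf sum_product mult_ac)
  also have "(\<Sum>yh\<in>labels n. P yh) = 1"
    using P by (simp add: dists_def)
  finally show ?thesis
    using P Q unfolding shift expected_feature_shift[OF Q, of w y, folded shift_def] w_def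
    by (simp add: expected_metric_pair p1_marginal_matrix p0_marginal_matrix rr_marginal_matrix)
qed

section \<open>The marginal matrices are exactly Delta\<close>

definition hypersimplex :: "nat \<Rightarrow> nat \<Rightarrow> (nat \<Rightarrow> real) set" where
  "hypersimplex n k = {x. (\<forall>i<n. 0 \<le> x i \<and> x i \<le> 1) \<and> (\<Sum>i<n. x i) = real k}"

definition fractional_coords :: "nat \<Rightarrow> (nat \<Rightarrow> real) \<Rightarrow> nat set" where
  "fractional_coords n x = {i. i < n \<and> 0 < x i \<and> x i < 1}"

definition level_dist_mean :: "nat \<Rightarrow> nat \<Rightarrow> ((nat \<Rightarrow> bool) \<Rightarrow> real) \<Rightarrow> (nat \<Rightarrow> real) \<Rightarrow> bool" where
  "level_dist_mean n k \<mu> x \<longleftrightarrow> \<mu> \<in> dists n \<and> (\<forall>v\<in>labels n. PP n v \<noteq> k \<longrightarrow> \<mu> v = 0)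
     \<and> (\<forall>i<n. (\<Sum>v\<in>labels n. \<mu> v * of_bool (v i)) = x i)"

lemma finite_fractional_coords [simp]: "finite (fractional_coords n x)"
  by (simp add: fractional_coords_def)

lemma hypersimplex_integral_coord:
  assumes "x \<in> hypersimplex n k" "i < n" "i \<notin> fractional_coords n x"
  shows "x i = of_bool (x i = 1)"
  using assms by (auto simp: hypersimplex_def fractional_coords_def)

lemma level_dist_mean_vertex:
  assumes x: "x \<in> hypersimplex n k" and "fractional_coords n x = {}"
  shows "\<exists>\<mu>. level_dist_mean n k \<mu> x"
proof -
  have x01: "x i = of_bool (x i = 1)" if "i < n" for i
    using hypersimplex_integral_coord[OF x that] assms(2) by simp
  define v0 where "v0 i \<longleftrightarrow> i < n \<and> x i = 1" for i
  have v0: "v0 \<in> labels n" by (simp add: labels_def v0_def)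
  have "real (PP n v0) = (\<Sum>i<n. x i)"
    unfolding of_nat_PP using x01 by (intro sum.cong refl) (auto simp: v0_def)
  then have "PP n v0 = k" using x by (simp add: hypersimplex_def)
  moreover have "(\<Sum>v\<in>labels n. of_bool (v = v0) * of_bool (v i)) = x i" if "i < n" for i
    using v0 x01[OF that] that by (simp add: v0_def sum_of_bool_mult_eq Int_absorb1)
  ultimately have "level_dist_mean n k (\<lambda>v. of_bool (v = v0)) x"
    using v0 by (auto simp: level_dist_mean_def dists_def sum_of_bool_mult_eq Int_absorb1)
  then show ?thesis by blast
qed

lemma fractional_coords_not_singleton:
  assumes x: "x \<in> hypersimplex n k" and i: "i \<in> fractional_coords n x"
  shows "\<exists>j\<in>fractional_coords n x. j \<noteq> i"
proof (rule ccontr)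
  assume no_other: "\<not> ?thesis"
  have x01: "x s = of_bool (x s = 1)" if "s \<in> {..<n} - {i}" for s
    using no_other that by (intro hypersimplex_integral_coord[OF x]) auto
  have "i < n" "0 < x i" "x i < 1" using i by (auto simp: fractional_coords_def)
  define c :: nat where "c = (\<Sum>s\<in>{..<n} - {i}. of_bool (x s = 1))"
  have "real k = x i + (\<Sum>s\<in>{..<n} - {i}. x s)"
    using x \<open>i < n\<close> by (simp add: hypersimplex_def sum.remove)
  also have "(\<Sum>s\<in>{..<n} - {i}. x s) = real c"
    unfolding c_def of_nat_sum by (intro sum.cong refl) (metis x01 of_nat_of_bool)
  finally have "x i = real k - real c" by simp
  then have "real c < real k" "real k < real (c + 1)"
    using \<open>0 < x i\<close> \<open>x i < 1\<close> by simp_all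
  then show False
    unfolding of_nat_less_iff by linarith
qed

lemma level_dist_mean_convex:
  assumes "level_dist_mean n k \<mu> x" "level_dist_mean n k \<nu> z" "0 \<le> l" "l \<le> 1"
  shows "level_dist_mean n k (\<lambda>v. l * \<mu> v + (1 - l) * \<nu> v) (\<lambda>i. l * x i + (1 - l) * z i)"
  using assms
  by (auto simp: level_dist_mean_def dists_def sum.distrib distrib_right sum_distrib_left[symmetric]
      mult.assoc)

lemma hypersimplex_move:
  assumes x: "x \<in> hypersimplex n k" and i: "i \<in> fractional_coords n x"
    and j: "j \<in> fractional_coords n x" and "i \<noteq> j"
  obtains \<alpha> where "0 < \<alpha>"
    and "(\<lambda>s. x s + \<alpha> * (of_bool (s = i) - of_bool (s = j))) \<in> hypersimplex n k"
    and "fractional_coords n (\<lambda>s. x s + \<alpha> * (of_bool (s = i) - of_bool (s = j)))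
           \<subset> fractional_coords n x"
proof
  define \<alpha> where "\<alpha> = min (1 - x i) (x j)"
  define x' where "x' s = x s + \<alpha> * (of_bool (s = i) - of_bool (s = j))" for s
  have "i < n" "0 < x i" "x i < 1" "j < n" "0 < x j" "x j < 1"
    using i j by (auto simp: fractional_coords_def)
  then show "0 < \<alpha>" by (simp add: \<alpha>_def)
  have "(\<Sum>s<n. x' s) = (\<Sum>s<n. x s) + \<alpha> * (\<Sum>s<n. of_bool (s = i) - of_bool (s = j))"
    by (simp add: x'_def sum.distrib sum_distrib_left)
  also have "(\<Sum>s<n. of_bool (s = i) - of_bool (s = j) :: real) = 0"
    using \<open>i < n\<close> \<open>j < n\<close> by (simp add: sum_subtractf)
  finally show "x' \<in> hypersimplex n k"
    using x \<open>i \<noteq> j\<close> \<open>x i < 1\<close> \<open>0 < x j\<close>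
    by (auto simp: hypersimplex_def x'_def \<alpha>_def min_def)
  have "fractional_coords n x' \<subseteq> fractional_coords n x"
    using \<open>0 < x i\<close> \<open>x i < 1\<close> \<open>0 < x j\<close> \<open>x j < 1\<close>
    by (auto simp: fractional_coords_def x'_def split: if_splits)
  moreover have "i \<notin> fractional_coords n x' \<or> j \<notin> fractional_coords n x'"
    using \<open>i \<noteq> j\<close> by (auto simp: fractional_coords_def x'_def \<alpha>_def min_def)
  ultimately show "fractional_coords n x' \<subset> fractional_coords n x"
    using i j by blast
qed

lemma mix_opposite_moves:
  fixes \<alpha> \<beta> :: real
  assumes "0 < \<alpha>" "0 < \<beta>"
  shows "(\<lambda>s. \<beta> / (\<alpha> + \<beta>) * (x s + \<alpha> * d s) + (1 - \<beta> / (\<alpha> + \<beta>)) * (x s + \<beta> * - d s)) = x"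
proof
  fix s
  have "\<beta> / (\<alpha> + \<beta>) * \<alpha> - (1 - \<beta> / (\<alpha> + \<beta>)) * \<beta> = 0"
    using assms by (simp add: field_simps)
  moreover have "\<beta> / (\<alpha> + \<beta>) * (x s + \<alpha> * d s) + (1 - \<beta> / (\<alpha> + \<beta>)) * (x s + \<beta> * - d s)
      = x s + (\<beta> / (\<alpha> + \<beta>) * \<alpha> - (1 - \<beta> / (\<alpha> + \<beta>)) * \<beta>) * d s"
    by (simp add: algebra_simps)
  ultimately show "\<beta> / (\<alpha> + \<beta>) * (x s + \<alpha> * d s) + (1 - \<beta> / (\<alpha> + \<beta>)) * (x s + \<beta> * - d s) = x s"
    by simp
qed

lemma hypersimplex_level_dist_mean:
  "x \<in> hypersimplex n k \<Longrightarrow> \<exists>\<mu>. level_dist_mean n k \<mu> x"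
proof (induction "card (fractional_coords n x)" arbitrary: x rule: less_induct)
  case less
  have IH: "\<exists>\<mu>. level_dist_mean n k \<mu> x'"
    if "x' \<in> hypersimplex n k" "fractional_coords n x' \<subset> fractional_coords n x" for x'
    using less.hyps[OF psubset_card_mono[OF finite_fractional_coords that(2)] that(1)] .
  show ?case
  proof (cases "fractional_coords n x = {}")
    case True
    then show ?thesis using level_dist_mean_vertex less.prems by blast
  next
    case False
    then obtain i where i: "i \<in> fractional_coords n x" by blast
    then obtain j where j: "j \<in> fractional_coords n x" "i \<noteq> j"
      using fractional_coords_not_singleton[OF less.prems] by blast
    obtain \<alpha> where "0 < \<alpha>"
      and "(\<lambda>s. x s + \<alpha> * (of_bool (s = i) - of_bool (s = j))) \<in> hypersimplex n k"
      and "fractional_coords n (\<lambda>s. x s + \<alpha> * (of_bool (s = i) - of_bool (s = j)))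
             \<subset> fractional_coords n x"
      using hypersimplex_move[OF less.prems i j] .
    with IH obtain \<mu> where \<mu>: "level_dist_mean n k \<mu> (\<lambda>s. x s + \<alpha> * (of_bool (s = i) - of_bool (s = j)))"
      by blast
    obtain \<beta> where "0 < \<beta>"
      and "(\<lambda>s. x s + \<beta> * (of_bool (s = j) - of_bool (s = i))) \<in> hypersimplex n k"
      and "fractional_coords n (\<lambda>s. x s + \<beta> * (of_bool (s = j) - of_bool (s = i)))
             \<subset> fractional_coords n x"
      using hypersimplex_move[OF less.prems j(1) i j(2)[symmetric]] .
    with IH obtain \<nu> where \<nu>: "level_dist_mean n k \<nu> (\<lambda>s. x s + \<beta> * (of_bool (s = j) - of_bool (s = i)))"
      by blast
    have "0 \<le> \<beta> / (\<alpha> + \<beta>)" "\<beta> / (\<alpha> + \<beta>) \<le> 1"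
      using \<open>0 < \<alpha>\<close> \<open>0 < \<beta>\<close> by auto
    from level_dist_mean_convex[OF \<mu> \<nu> this]
    show ?thesis
      using mix_opposite_moves[OF \<open>0 < \<alpha>\<close> \<open>0 < \<beta>\<close>, of x "\<lambda>s. of_bool (s = i) - of_bool (s = j)"]
      by auto
  qed
qed

lemma level_measure_with_mean:
  assumes "0 \<le> R" and "\<forall>i<n. 0 \<le> x i \<and> x i \<le> R" and "(\<Sum>i<n. x i) = real k * R"
  shows "\<exists>\<nu>. (\<forall>v. 0 \<le> \<nu> v) \<and> (\<forall>v. \<nu> v \<noteq> 0 \<longrightarrow> v \<in> labels n \<and> PP n v = k)
    \<and> sum \<nu> (labels n) = R \<and> (\<forall>i<n. (\<Sum>v\<in>labels n. \<nu> v * of_bool (v i)) = x i)"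
proof (cases "R = 0")
  case True
  then show ?thesis using assms(2) by (intro exI[of _ "\<lambda>_. 0"]) auto
next
  case False
  with assms have "(\<lambda>i. x i / R) \<in> hypersimplex n k"
    by (auto simp: hypersimplex_def sum_divide_distrib[symmetric])
  then obtain \<mu> where \<mu>: "level_dist_mean n k \<mu> (\<lambda>i. x i / R)"
    using hypersimplex_level_dist_mean by blast
  have "0 \<le> \<mu> v" for v
    using \<mu> by (cases "v \<in> labels n") (auto simp: level_dist_mean_def dists_def)
  then have "(\<forall>v. 0 \<le> R * \<mu> v) \<and> (\<forall>v. R * \<mu> v \<noteq> 0 \<longrightarrow> v \<in> labels n \<and> PP n v = k)
    \<and> (\<Sum>v\<in>labels n. R * \<mu> v) = R \<and> (\<forall>i<n. (\<Sum>v\<in>labels n. R * \<mu> v * of_bool (v i)) = x i)"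
    using \<mu> assms(1) False
    by (auto simp: level_dist_mean_def dists_def mult.assoc sum_distrib_left[symmetric])
  then show ?thesis by (rule exI[of _ "\<lambda>v. R * \<mu> v"])
qed

lemma pos_mass_level_measure:
  assumes "\<And>v. \<nu> v \<noteq> 0 \<Longrightarrow> PP n v = l"
  shows "pos_mass n \<nu> k s = of_bool (l = k) * (\<Sum>v\<in>labels n. \<nu> v * of_bool (v s))"
proof -
  have "\<nu> v * of_bool (PP n v = k) = of_bool (l = k) * \<nu> v" for v
    using assms[of v] by (cases "\<nu> v = 0") auto
  then show ?thesis
    unfolding pos_mass_def sum_distrib_left by (intro sum.cong refl) (metis mult.commute mult.left_commute)
qed

lemma Delta_column_measure:
  assumes P: "P \<in> Delta n" and k: "k \<in> {1..n}"
  shows "\<exists>\<nu>. (\<forall>v. 0 \<le> \<nu> v) \<and> (\<forall>v. \<nu> v \<noteq> 0 \<longrightarrow> v \<in> labels n \<and> PP n v = k)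
    \<and> sum \<nu> (labels n) = rr n P k \<and> (\<forall>i<n. (\<Sum>v\<in>labels n. \<nu> v * of_bool (v i)) = P i k)"
proof (rule level_measure_with_mean)
  have "\<forall>i<n. 0 \<le> P i k \<and> P i k \<le> (1 / real k) * (\<Sum>j<n. P j k)"
    using P k by (simp add: Delta_def)
  moreover from this have "0 \<le> (1 / real k) * (\<Sum>j<n. P j k)"
    by (auto intro!: divide_nonneg_nonneg sum_nonneg)
  ultimately show "0 \<le> rr n P k" "\<forall>i<n. 0 \<le> P i k \<and> P i k \<le> rr n P k"
    using k by (simp_all add: rr_def)
  show "(\<Sum>i<n. P i k) = real k * rr n P k"
    using k by (simp add: rr_def)
qed

lemma marginal_matrix_surj:
  assumes P: "P \<in> Delta n"
  shows "\<exists>D\<in>dists n. marginal_matrix n D = P"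
proof -
  have "\<forall>k\<in>{1..n}. \<exists>\<nu>. (\<forall>v. 0 \<le> \<nu> v) \<and> (\<forall>v. \<nu> v \<noteq> 0 \<longrightarrow> v \<in> labels n \<and> PP n v = k)
    \<and> sum \<nu> (labels n) = rr n P k \<and> (\<forall>i<n. (\<Sum>v\<in>labels n. \<nu> v * of_bool (v i)) = P i k)"
    using Delta_column_measure[OF P] by blast
  from bchoice[OF this] obtain \<nu> where \<nu>_nonneg: "\<And>k v. k \<in> {1..n} \<Longrightarrow> 0 \<le> \<nu> k v"
    and \<nu>_supp: "\<And>k v. k \<in> {1..n} \<Longrightarrow> \<nu> k v \<noteq> 0 \<Longrightarrow> v \<in> labels n \<and> PP n v = k"
    and \<nu>_mass: "\<And>k. k \<in> {1..n} \<Longrightarrow> sum (\<nu> k) (labels n) = rr n P k"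
    and \<nu>_mean: "\<And>k i. k \<in> {1..n} \<Longrightarrow> i < n \<Longrightarrow> (\<Sum>v\<in>labels n. \<nu> k v * of_bool (v i)) = P i k"
    by blast
  \<comment> \<open>The all-negative labelling has \<open>PP = 0\<close>, so its weight \<open>rr n P 0\<close> is invisible in the matrix.\<close>
  define D where "D v = rr n P 0 * of_bool (v = (\<lambda>_. False)) + (\<Sum>k\<in>{1..n}. \<nu> k v)" for v
  have "D \<in> dists n"
  proof -
    have "0 \<le> rr n P 0"
      using P by (simp add: Delta_def rr_def)
    then have "0 \<le> D v" for v
      using \<nu>_nonneg by (auto simp: D_def intro!: add_nonneg_nonneg sum_nonneg)
    moreover have "D v = 0" if "v \<notin> labels n" for v
      using that \<nu>_supp by (auto simp: D_def intro!: sum.neutral)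
    moreover have "sum D (labels n) = rr n P 0 * (\<Sum>v\<in>labels n. of_bool (v = (\<lambda>_. False)))
        + (\<Sum>v\<in>labels n. \<Sum>k\<in>{1..n}. \<nu> k v)"
      unfolding D_def sum.distrib sum_distrib_left ..
    moreover have "(\<Sum>v\<in>labels n. of_bool (v = (\<lambda>_. False)) :: real) = 1"
      by (simp add: sum_of_bool_eq Int_absorb1)
    moreover have "(\<Sum>v\<in>labels n. \<Sum>k\<in>{1..n}. \<nu> k v) = (\<Sum>k\<in>{1..n}. rr n P k)"
      by (subst sum.swap) (simp add: \<nu>_mass)
    ultimately show ?thesis
      by (simp add: dists_def rr_def)
  qed
  moreover have "marginal_matrix n D i k = P i k" for i k
  proof (cases "i < n \<and> k \<in> {1..n}")
    case True
    have "pos_mass n D k i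
        = (\<Sum>v\<in>labels n. \<Sum>k'\<in>{1..n}. \<nu> k' v * of_bool (v i) * of_bool (PP n v = k))"
      unfolding pos_mass_def D_def by (intro sum.cong refl) (auto simp: sum_distrib_right)
    also have "\<dots> = (\<Sum>k'\<in>{1..n}. pos_mass n (\<nu> k') k i)"
      unfolding pos_mass_def by (rule sum.swap)
    also have "\<dots> = (\<Sum>k'\<in>{1..n}. of_bool (k' = k) * P i k)"
      using True \<nu>_supp \<nu>_mean by (intro sum.cong refl) (simp add: pos_mass_level_measure)
    finally show ?thesis
      using True by (simp add: marginal_matrix_def sum_of_bool_mult_eq Int_absorb1)
  next
    case False
    then have "n \<le> i \<or> k = 0 \<or> n < k" by auto
    with P show ?thesis by (auto simp: marginal_matrix_def Delta_def)
  qed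
  ultimately show ?thesis by blast
qed

lemma marginal_matrix_image: "marginal_matrix n ` dists n = Delta n"
  using marginal_matrix_Delta marginal_matrix_surj by blast

section \<open>Inf-sup problems along a surjective reparametrisation\<close>

lemma bij_add_ereal: "bij (\<lambda>x. x + ereal c)"
proof (rule o_bij[of "\<lambda>x. x - ereal c"])
  have "x + ereal c - ereal c = x" "x - ereal c + ereal c = x" for x
    by (cases x; simp)+
  then show "(\<lambda>x. x - ereal c) \<circ> (\<lambda>x. x + ereal c) = id" "(\<lambda>x. x + ereal c) \<circ> (\<lambda>x. x - ereal c) = id"
    by (simp_all add: fun_eq_iff)
qed

lemma INF_add_ereal:
  "(INF x\<in>A. f x + ereal c) = (INF x\<in>A. f x) + ereal c"
  using mono_bij_Inf[OF _ bij_add_ereal, of c "f ` A"] by (simp add: image_image mono_def add_right_mono)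

lemma SUP_add_ereal:
  "(SUP x\<in>A. f x + ereal c) = (SUP x\<in>A. f x) + ereal c"
  by (cases "A = {}") (simp_all add: SUP_ereal_add_left bot_ereal_def)

lemma INF_SUP_reparametrize:
  fixes F :: "'a \<Rightarrow> 'a \<Rightarrow> real" and G :: "'b \<Rightarrow> 'b \<Rightarrow> real"
  assumes h: "h ` A = B"
    and F: "\<And>P Q. P \<in> A \<Longrightarrow> Q \<in> A \<Longrightarrow> F Q P = G (h Q) (h P) + c"
    and C: "\<And>P. P \<in> A \<Longrightarrow> CA P \<longleftrightarrow> CB (h P)"
  shows "(INF Q\<in>A. SUP P\<in>{P\<in>A. CA P}. ereal (F Q P))
    = (INF Q\<in>B. SUP P\<in>{P\<in>B. CB P}. ereal (G Q P)) + ereal c"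
proof -
  have feasible: "h ` {P\<in>A. CA P} = {P\<in>B. CB P}"
    using h C by auto
  have "(INF Q\<in>A. SUP P\<in>{P\<in>A. CA P}. ereal (F Q P))
      = (INF Q\<in>A. SUP P\<in>{P\<in>A. CA P}. ereal (G (h Q) (h P)) + ereal c)"
    using F by (intro INF_cong SUP_cong refl) simp
  also have "\<dots> = (INF Q\<in>A. SUP P\<in>{P\<in>A. CA P}. ereal (G (h Q) (h P))) + ereal c"
    unfolding SUP_add_ereal INF_add_ereal ..
  also have "\<dots> = (INF Q\<in>B. SUP P\<in>{P\<in>B. CB P}. ereal (G Q P)) + ereal c"
    unfolding feasible[symmetric] image_image unfolding h[symmetric] image_image ..
  finally show ?thesis .
qed

theorem theorem5:
  fixes n m t :: nat
    and y :: "nat \<Rightarrow> bool" and lstar :: nat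
    and Psi :: "nat \<Rightarrow> nat \<Rightarrow> real"
    and tau :: "nat \<Rightarrow> real"
    and J :: "nat \<Rightarrow> nat"
    and a b :: "nat \<Rightarrow> nat \<Rightarrow> real"
    and f g :: "nat \<Rightarrow> nat \<Rightarrow> nat \<Rightarrow> nat \<Rightarrow> real"
  assumes "1 \<le> n" and "1 \<le> m" and "1 \<le> t"
    and "y \<in> labels n"
    and "lstar = (\<Sum>i<n. of_bool (y i))"
    and "\<And>i j k l. i \<le> t \<Longrightarrow> j < J i \<Longrightarrow> k \<le> n \<Longrightarrow> l \<le> n \<Longrightarrow> g i j k l \<noteq> 0"
  shows
  "(SUP \<theta>\<in>{\<theta> :: nat \<Rightarrow> real. \<forall>r. m \<le> r \<longrightarrow> \<theta> r = 0}.
      INF Q\<in>dists n.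
        SUP P\<in>{P \<in> dists n. \<forall>i\<in>{1..t}.
                   (\<Sum>v\<in>labels n. P v * metric a b f g J n i v y) \<ge> tau i}.
          ereal (\<Sum>yh\<in>labels n. \<Sum>yc\<in>labels n. P yh * Q yc *
             (metric a b f g J n 0 yh yc
              - (\<Sum>r<m. \<theta> r * (\<Sum>i<n. Psi r i * (of_bool (yc i) - of_bool (y i)))))))
   =
   (SUP \<theta>\<in>{\<theta> :: nat \<Rightarrow> real. \<forall>r. m \<le> r \<longrightarrow> \<theta> r = 0}.
      (INF Q\<in>Delta n.
        SUP P\<in>{P \<in> Delta n. \<forall>i\<in>{1..t}.
            (\<Sum>k\<in>{0..n}. \<Sum>j<J i. (1 / g i j k lstar) *
               (a i j * (\<Sum>s<n. p1 P k s * of_bool (y s))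
                + b i j * (\<Sum>s<n. p0 n P k s * (1 - of_bool (y s)))
                + f i j k lstar * rr n P k)) \<ge> tau i}.
          ereal ((\<Sum>k\<in>{0..n}. \<Sum>l\<in>{0..n}. \<Sum>j<J 0. (1 / g 0 j k l) *
                    (a 0 j * (\<Sum>s<n. p1 P k s * p1 Q l s)
                     + b 0 j * (\<Sum>s<n. p0 n P k s * p0 n Q l s)
                     + f 0 j k l * rr n P k * rr n Q l))
                 - (\<Sum>s<n. (\<Sum>l\<in>{1..n}. Q s l) * (\<Sum>r<m. Psi r s * \<theta> r))))
      + ereal (\<Sum>s<n. of_bool (y s) * (\<Sum>r<m. Psi r s * \<theta> r)))"
proof (rule SUP_cong[OF refl], rule INF_SUP_reparametrize[where h = "marginal_matrix n"])
  show "marginal_matrix n ` dists n = Delta n"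
    by (rule marginal_matrix_image)
qed (simp_all only: expected_objective expected_constraint[OF _ assms(5)])

end
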